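(* For every integer $R$ with $0\le R<\ell$ and every $y\in\{0,1\}^n$ with $y\ne0^n$, $$\Big\|\sum_{o\in[R]}\big(\mathrm{id}-\mathsf{QE}_{=o}\big)\cdot\tilde H_y\cdot\mathsf{QEC}_{(R,=o)}\Big\|_{\mathrm{op}}\le\frac{R^5}{\sqrt\ell}.$$
   Context: $[m]=\{0,1,\dots,m-1\}$. Bosonic setting with $2^n$ modes indexed by $\{0,1\}^n$: position operators $\hat a_x,\hat a_x^\dagger$ with standard bosonic commutation relations, vacuum $|\mathrm{vac}\rangle$, momentum operators $\tilde a_y=2^{-n/2}\sum_x(-1)^{x\cdot y}\hat a_x$ and $\tilde a_y^\dagger$ likewise, momentum Fock states $|u\rangle=\prod_y(\tilde a_y^\dagger)^{u_y}(u_y!)^{-1/2}|\mathrm{vac}\rangle$. Work in the $\ell$-boson subspace ($\sum_yu_y=\ell$). $\tilde H_y=\frac1\ell\sum_{x,x'}\tilde a^\dagger_{x\oplus y}\tilde a^\dagger_{x'\oplus y}\tilde a_x\tilde a_{x'}$. $\mathsf{Con}_R$ projects onto momentum Fock states with $u_{0^n}\ge\ell-R$; $\mathsf{QE}_{=o}$ projects onto those with exactly $o$ odd entries $u_y$ among $y\ne0^n$; $\mathsf{QEC}_{(R,=o)}=\mathsf{Con}_R\mathsf{QE}_{=o}$. *)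

theory Defs
  imports "HOL-Analysis.Analysis"
begin

text \<open>Modes are indexed by bit strings in {0,1}^n, encoded as natural numbers
  x < 2^n (bit i of x is the i-th coordinate); x \<oplus> y is bitwise xor, and
  0^n is the number 0.  A momentum Fock state |u> is given by its occupation
  function u :: nat \<Rightarrow> nat (u y = number of bosons in momentum mode y).\<close>

type_synonym occ = "nat \<Rightarrow> nat"
type_synonym fstate = "occ \<Rightarrow> complex"
type_synonym fop = "fstate \<Rightarrow> fstate"

definition fock_basis :: "nat \<Rightarrow> nat \<Rightarrow> occ set" where
  "fock_basis n ell = {u. (\<forall>z. 2^n \<le> z \<longrightarrow> u z = 0) \<and> (\<Sum>y<2^n. u y) = ell}"

definition boson_space :: "nat \<Rightarrow> nat \<Rightarrow> fstate set" where
  "boson_space n ell = {\<psi>. \<forall>v. v \<notin> fock_basis n ell \<longrightarrow> \<psi> v = 0}"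

definition fnorm :: "nat \<Rightarrow> nat \<Rightarrow> fstate \<Rightarrow> real" where
  "fnorm n ell \<psi> = sqrt (\<Sum>v\<in>fock_basis n ell. (cmod (\<psi> v))\<^sup>2)"

text \<open>Momentum annihilation operator: a_x |u> = sqrt(u_x) |u - e_x>.\<close>
definition ann :: "nat \<Rightarrow> fop" where
  "ann x \<psi> = (\<lambda>v. complex_of_real (sqrt (real (v x + 1))) * \<psi> (v(x := v x + 1)))"

text \<open>Momentum creation operator: a_x^dagger |u> = sqrt(u_x+1) |u + e_x>.\<close>
definition cre :: "nat \<Rightarrow> fop" where
  "cre x \<psi> = (\<lambda>v. if 0 < v x then complex_of_real (sqrt (real (v x))) * \<psi> (v(x := v x - 1)) else 0)"

definition Htilde :: "nat \<Rightarrow> nat \<Rightarrow> nat \<Rightarrow> fop" where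
  "Htilde n ell y \<psi> = (\<lambda>v. (1 / of_nat ell) *
     (\<Sum>x<2^n. \<Sum>x'<2^n.
        cre (xor x y) (cre (xor x' y) (ann x (ann x' \<psi>))) v))"

definition Con :: "nat \<Rightarrow> nat \<Rightarrow> fop" where
  "Con ell R \<psi> = (\<lambda>v. if ell - R \<le> v 0 then \<psi> v else 0)"

definition odd_count :: "nat \<Rightarrow> occ \<Rightarrow> nat" where
  "odd_count n v = card {y. 0 < y \<and> y < 2^n \<and> odd (v y)}"

definition QE :: "nat \<Rightarrow> nat \<Rightarrow> fop" where
  "QE n k \<psi> = (\<lambda>v. if odd_count n v = k then \<psi> v else 0)"

definition QEC :: "nat \<Rightarrow> nat \<Rightarrow> nat \<Rightarrow> nat \<Rightarrow> fop" where
  "QEC n ell R k = Con ell R \<circ> QE n k"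

definition op_norm :: "nat \<Rightarrow> nat \<Rightarrow> fop \<Rightarrow> real" where
  "op_norm n ell A = Sup {fnorm n ell (A \<psi>) | \<psi>. \<psi> \<in> boson_space n ell \<and> fnorm n ell \<psi> \<le> 1}"

end

theory Submission
  imports Defs
begin

(* A pair-hopping term a+(x+y) a+(x'+y) a(x) a(x') of H~_y (+ is xor) maps each momentum Fock
   state to a single one, and it changes the number of odd occupations only if x <> x' and
   x' <> x+y.  Such a term takes a state with at least l - R bosons in the condensate mode 0 to one
   with at most R + 1 excited bosons, so at most (R+2)^2 terms reach any basis state, and
   Cauchy-Schwarz costs only that factor.  Each term is injective, and at a source state with
   s <= R excited bosons its squared coefficients sum over all pairs (x, x') to O(l R^3): of the
   four modes involved at most one is the condensate, so at most one factor is of order l.  Hence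
   the squared norm of the image of a unit vector is at most (R+2)^2 O(l R^3) / l^2 <= R^10 / l.
   For R <= 1 the source states carry no excitations at all (at most one excited boson, in an
   even mode), and the bound is 0. *)

lemma norm_sum_squared_le_card_support:
  fixes f :: "'p \<Rightarrow> 'a::real_normed_vector"
  assumes "finite P"
  shows "(norm (\<Sum>p\<in>P. f p))\<^sup>2 \<le> real (card {p \<in> P. f p \<noteq> 0}) * (\<Sum>p\<in>P. (norm (f p))\<^sup>2)"
proof -
  define S where "S = {p \<in> P. f p \<noteq> 0}"
  have S: "finite S" "S \<subseteq> P" using assms by (auto simp: S_def)
  have "(\<Sum>p\<in>P. f p) = (\<Sum>p\<in>S. f p)"
    using assms by (intro sum.mono_neutral_right) (auto simp: S_def)
  then have "norm (\<Sum>p\<in>P. f p) \<le> (\<Sum>p\<in>S. norm (f p) * 1)"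
    by (simp add: norm_sum)
  then have "(norm (\<Sum>p\<in>P. f p))\<^sup>2 \<le> (\<Sum>p\<in>S. norm (f p) * 1)\<^sup>2"
    by (simp add: power_mono)
  also have "\<dots> \<le> (\<Sum>p\<in>S. (norm (f p))\<^sup>2) * real (card S)"
    using Cauchy_Schwarz_ineq_sum[of "\<lambda>p. norm (f p)" "\<lambda>_. 1" S] by simp
  also have "\<dots> \<le> (\<Sum>p\<in>P. (norm (f p))\<^sup>2) * real (card S)"
    using assms S by (intro mult_right_mono sum_mono2) auto
  finally show ?thesis by (simp add: S_def mult.commute)
qed

lemma sum_norm_sum_squared_le:
  fixes G :: "'v \<Rightarrow> 'p \<Rightarrow> 'a::real_normed_vector" and D :: "'w \<Rightarrow> 'p \<Rightarrow> real"
  assumes "finite P"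
    and support: "\<And>v. v \<in> V \<Longrightarrow> card {p \<in> P. G v p \<noteq> 0} \<le> K"
    and transfer: "\<And>p. p \<in> P \<Longrightarrow> (\<Sum>v\<in>V. (norm (G v p))\<^sup>2) \<le> (\<Sum>w\<in>W. D w p * \<phi> w)"
    and weight: "\<And>w. w \<in> W \<Longrightarrow> \<phi> w \<noteq> 0 \<Longrightarrow> real K * (\<Sum>p\<in>P. D w p) \<le> M"
    and nonneg: "\<And>w. w \<in> W \<Longrightarrow> 0 \<le> \<phi> w"
  shows "(\<Sum>v\<in>V. (norm (\<Sum>p\<in>P. G v p))\<^sup>2) \<le> M * (\<Sum>w\<in>W. \<phi> w)"
proof -
  have "(\<Sum>v\<in>V. (norm (\<Sum>p\<in>P. G v p))\<^sup>2) \<le> (\<Sum>v\<in>V. real K * (\<Sum>p\<in>P. (norm (G v p))\<^sup>2))"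
  proof (rule sum_mono)
    fix v assume "v \<in> V"
    have "(norm (\<Sum>p\<in>P. G v p))\<^sup>2 \<le> real (card {p \<in> P. G v p \<noteq> 0}) * (\<Sum>p\<in>P. (norm (G v p))\<^sup>2)"
      using \<open>finite P\<close> by (rule norm_sum_squared_le_card_support)
    also have "\<dots> \<le> real K * (\<Sum>p\<in>P. (norm (G v p))\<^sup>2)"
      using support[OF \<open>v \<in> V\<close>] by (intro mult_right_mono sum_nonneg) auto
    finally show "(norm (\<Sum>p\<in>P. G v p))\<^sup>2 \<le> real K * (\<Sum>p\<in>P. (norm (G v p))\<^sup>2)" .
  qed
  also have "\<dots> = real K * (\<Sum>p\<in>P. \<Sum>v\<in>V. (norm (G v p))\<^sup>2)"
    by (simp add: sum_distrib_left sum.swap[of _ V])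
  also have "\<dots> \<le> real K * (\<Sum>p\<in>P. \<Sum>w\<in>W. D w p * \<phi> w)"
    by (intro mult_left_mono sum_mono transfer) auto
  also have "\<dots> = (\<Sum>w\<in>W. \<phi> w * (real K * (\<Sum>p\<in>P. D w p)))"
    by (simp add: sum_distrib_left sum_distrib_right sum.swap[of _ P] mult_ac)
  also have "\<dots> \<le> (\<Sum>w\<in>W. \<phi> w * M)"
    using weight nonneg by (intro sum_mono) (metis mult_left_mono mult_zero_left)
  finally show ?thesis by (simp add: sum_distrib_left mult.commute)
qed

lemma card_positive_le_sum:
  fixes f :: "'a \<Rightarrow> nat"
  assumes "finite A"
  shows "card {m \<in> A. 0 < f m} \<le> sum f A"
proof -
  have "card {m \<in> A. 0 < f m} = (\<Sum>m\<in>{m \<in> A. 0 < f m}. 1)" by simp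
  also have "\<dots> \<le> (\<Sum>m\<in>{m \<in> A. 0 < f m}. f m)" by (intro sum_mono) auto
  also have "\<dots> \<le> sum f A" using assms by (intro sum_mono2) auto
  finally show ?thesis .
qed

lemma finite_fock_basis: "finite (fock_basis n ell)"
proof (rule finite_subset)
  let ?F = "{u. \<forall>x. (x \<in> {..<(2::nat)^n} \<longrightarrow> u x \<in> {..ell}) \<and> (x \<notin> {..<2^n} \<longrightarrow> u x = 0)}"
  show "fock_basis n ell \<subseteq> ?F"
  proof
    fix u assume u: "u \<in> fock_basis n ell"
    have "u x \<le> (\<Sum>y<2^n. u y)" if "x < 2^n" for x
      using that by (intro member_le_sum) auto
    with u show "u \<in> ?F" by (auto simp: fock_basis_def)
  qed
  show "finite ?F"
    by (rule finite_set_of_finite_funs) auto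
qed

lemma fock_basis_excitations:
  assumes "v \<in> fock_basis n ell"
  shows "v 0 \<le> ell" and "(\<Sum>m\<in>{..<2^n} - {0}. v m) = ell - v 0"
proof -
  have "ell = v 0 + (\<Sum>m\<in>{..<2^n} - {0}. v m)"
    using assms by (simp add: fock_basis_def sum.remove[of "{..<2^n}" 0])
  then show "v 0 \<le> ell" "(\<Sum>m\<in>{..<2^n} - {0}. v m) = ell - v 0" by linarith+
qed

lemma fock_basis_excited_le:
  assumes "v \<in> fock_basis n ell" and "m \<noteq> 0"
  shows "v m \<le> ell - v 0"
proof (cases "m < 2^n")
  case True
  then have "v m \<le> (\<Sum>m\<in>{..<2^n} - {0}. v m)"
    using assms(2) by (intro member_le_sum) auto
  then show ?thesis using fock_basis_excitations(2)[OF assms(1)] by simp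
next
  case False
  then show ?thesis using assms(1) by (simp add: fock_basis_def)
qed

lemma card_occupied_le:
  assumes "v \<in> fock_basis n ell"
  shows "card {m \<in> {..<2^n}. 0 < v m} \<le> ell - v 0 + 1"
proof -
  have "{m \<in> {..<2^n}. 0 < v m} \<subseteq> insert 0 {m \<in> {..<2^n} - {0}. 0 < v m}" by auto
  then have "card {m \<in> {..<2^n}. 0 < v m} \<le> card (insert 0 {m \<in> {..<2^n} - {0}. 0 < v m})"
    by (intro card_mono) auto
  also have "\<dots> \<le> card {m \<in> {..<2^n} - {0}. 0 < v m} + 1"
    by (simp add: card_insert_le_m1)
  also have "card {m \<in> {..<2^n} - {0}. 0 < v m} \<le> ell - v 0"
    using card_positive_le_sum[of "{..<2^n} - {0}" v] fock_basis_excitations(2)[OF assms] by simp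
  finally show ?thesis by simp
qed

lemma fock_basis_even_excitations:
  assumes "w \<in> fock_basis n ell" and "odd_count n w = 0" and "ell - w 0 \<le> 1"
  shows "w 0 = ell"
proof -
  have "finite {m. 0 < m \<and> m < 2^n \<and> odd (w m)}" by (rule finite_subset[of _ "{..<2^n}"]) auto
  with assms(2) have even: "even (w m)" if "0 < m" "m < 2^n" for m
    using that by (auto simp: odd_count_def)
  have "w m = 0" if "m \<in> {..<2^n} - {0}" for m
    using fock_basis_excited_le[OF assms(1), of m] assms(3) even[of m] that by fastforce
  then have "ell - w 0 = 0"
    using fock_basis_excitations(2)[OF assms(1)] by simp
  then show ?thesis using fock_basis_excitations(1)[OF assms(1)] by simp
qed

lemma xor_xor_cancel [simp]: "xor (xor (x::nat) y) y = x"
  by (simp add: xor.assoc)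

lemma xor_eq_self_iff [simp]: "xor (x::nat) y = x \<longleftrightarrow> y = 0"
  by (metis xor.assoc xor.left_neutral xor_self_eq)

lemma self_eq_xor_iff [simp]: "(x::nat) = xor x y \<longleftrightarrow> y = 0"
  by (metis xor_eq_self_iff)

lemma xor_eq_0_iff [simp]: "xor (x::nat) y = 0 \<longleftrightarrow> x = y"
  by (metis xor_xor_cancel xor.left_neutral xor_self_eq)

lemma xor_right_cancel_iff [simp]: "xor (x::nat) y = xor x' y \<longleftrightarrow> x = x'"
  by (metis xor_xor_cancel)

text \<open>The summand \<open>cre (x \<oplus> y) (cre (x' \<oplus> y) (ann x (ann x' \<psi>)))\<close> of \<open>Htilde\<close> takes
  the amplitude of \<open>pair_hop y x x' v\<close> to \<open>v\<close>, multiplied by the product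
  \<open>pair_hop_coeff y x x' v\<close> of the four bosonic square-root factors.\<close>

definition pair_hop :: "nat \<Rightarrow> nat \<Rightarrow> nat \<Rightarrow> occ \<Rightarrow> occ" where
  "pair_hop y x x' v =
     (let a = xor x y; b = xor x' y; v1 = v(a := v a - 1); v2 = v1(b := v1 b - 1);
          v3 = v2(x := v2 x + 1)
      in v3(x' := v3 x' + 1))"

definition pair_hop_coeff :: "nat \<Rightarrow> nat \<Rightarrow> nat \<Rightarrow> occ \<Rightarrow> real" where
  "pair_hop_coeff y x x' v =
     (let a = xor x y; b = xor x' y; v1 = v(a := v a - 1); v2 = v1(b := v1 b - 1);
          v3 = v2(x := v2 x + 1)
      in if 0 < v a \<and> 0 < v1 b
         then sqrt (real (v a)) * sqrt (real (v1 b)) * sqrt (real (v2 x + 1)) * sqrt (real (v3 x' + 1))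
         else 0)"

lemma cre_cre_ann_ann:
  "cre (xor x y) (cre (xor x' y) (ann x (ann x' \<psi>))) v
     = of_real (pair_hop_coeff y x x' v) * \<psi> (pair_hop y x x' v)"
  unfolding cre_def ann_def pair_hop_coeff_def pair_hop_def Let_def by simp

lemma Htilde_eq:
  "Htilde n ell y \<psi> v = 1 / of_nat ell *
     (\<Sum>x<2^n. \<Sum>x'<2^n. of_real (pair_hop_coeff y x x' v) * \<psi> (pair_hop y x x' v))"
  by (simp add: Htilde_def cre_cre_ann_ann)

lemma pair_hop_coeff_nonzeroD:
  assumes "pair_hop_coeff y x x' v \<noteq> 0"
  shows "of_bool (m = xor x y) + of_bool (m = xor x' y) \<le> v m"
  using assms unfolding pair_hop_coeff_def Let_def by (auto split: if_splits)

lemma pair_hop_int: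
  assumes "pair_hop_coeff y x x' v \<noteq> 0"
  shows "int (pair_hop y x x' v m) = int (v m) + of_bool (m = x) + of_bool (m = x')
           - of_bool (m = xor x y) - of_bool (m = xor x' y)"
  using pair_hop_coeff_nonzeroD[OF assms, of m] unfolding pair_hop_def Let_def
  by (auto split: if_splits)

lemma inj_on_pair_hop: "inj_on (pair_hop y x x') {v. pair_hop_coeff y x x' v \<noteq> 0}"
proof (rule inj_onI, rule ext)
  fix v v' m
  assume "v \<in> {v. pair_hop_coeff y x x' v \<noteq> 0}" "v' \<in> {v. pair_hop_coeff y x x' v \<noteq> 0}"
    and "pair_hop y x x' v = pair_hop y x x' v'"
  then show "v m = v' m" using pair_hop_int[of y x x' v m] pair_hop_int[of y x x' v' m] by simp
qed

lemma odd_count_pair_hop_eq: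
  assumes "pair_hop_coeff y x x' v \<noteq> 0" and "x = x' \<or> x' = xor x y"
  shows "odd_count n (pair_hop y x x' v) = odd_count n v"
proof -
  have "odd (pair_hop y x x' v m) \<longleftrightarrow> odd (v m)" for m
  proof -
    have "odd (int (pair_hop y x x' v m)) \<longleftrightarrow> odd (int (v m))"
      using pair_hop_int[OF assms(1), of m] assms(2) by (auto simp: of_bool_def)
    then show ?thesis by simp
  qed
  then show ?thesis by (simp add: odd_count_def)
qed

lemma pair_hop_zero_le:
  assumes "pair_hop_coeff y x x' v \<noteq> 0" and "x \<noteq> x'"
  shows "pair_hop y x x' v 0 \<le> v 0 + 1"
proof -
  have "int (pair_hop y x x' v 0) \<le> int (v 0) + 1"
    using pair_hop_int[OF assms(1), of 0] assms(2) by (auto simp: of_bool_def)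
  then show ?thesis by simp
qed

definition hop_weight :: "nat \<Rightarrow> occ \<Rightarrow> nat \<Rightarrow> nat \<Rightarrow> nat" where
  "hop_weight y w x x' =
     (if x \<noteq> x' \<and> x' \<noteq> xor x y then w x * w x' * (w (xor x y) + 1) * (w (xor x' y) + 1) else 0)"

lemma pair_hop_coeff_squared:
  assumes "y \<noteq> 0" "x \<noteq> x'" "x' \<noteq> xor x y" and nz: "pair_hop_coeff y x x' v \<noteq> 0"
  shows "(pair_hop_coeff y x x' v)\<^sup>2 = real (hop_weight y (pair_hop y x x' v) x x')"
proof -
  have distinct: "xor x y \<noteq> x" "xor x' y \<noteq> x'" "xor x y \<noteq> xor x' y" "xor x' y \<noteq> x" "xor x y \<noteq> x'"
    using assms(1-3) by (auto dest: sym)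
  have "pair_hop_coeff y x x' v
          = sqrt (v (xor x y)) * sqrt (v (xor x' y)) * sqrt (v x + 1) * sqrt (v x' + 1)"
    using nz distinct assms(2) unfolding pair_hop_coeff_def Let_def by (simp split: if_splits)
  moreover have "pair_hop y x x' v x = v x + 1" "pair_hop y x x' v x' = v x' + 1"
    "pair_hop y x x' v (xor x y) + 1 = v (xor x y)" "pair_hop y x x' v (xor x' y) + 1 = v (xor x' y)"
    using pair_hop_int[OF nz, of x] pair_hop_int[OF nz, of x'] pair_hop_int[OF nz, of "xor x y"]
      pair_hop_int[OF nz, of "xor x' y"] distinct assms(2) by auto
  ultimately show ?thesis
    using assms(2,3) by (simp add: hop_weight_def power_mult_distrib algebra_simps)
qed

text \<open>\<open>low_sector n ell R \<psi>\<close> is \<open>\<Sum>k<R. QEC n ell R k \<psi>\<close>.\<close>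

definition low_sector :: "nat \<Rightarrow> nat \<Rightarrow> nat \<Rightarrow> fstate \<Rightarrow> fstate" where
  "low_sector n ell R \<psi> w = (if ell - R \<le> w 0 \<and> odd_count n w < R then \<psi> w else 0)"

definition leak_term :: "nat \<Rightarrow> nat \<Rightarrow> nat \<Rightarrow> nat \<Rightarrow> fstate \<Rightarrow> occ \<Rightarrow> nat \<Rightarrow> nat \<Rightarrow> complex" where
  "leak_term n ell R y \<psi> v x x' =
     (if odd_count n v \<noteq> odd_count n (pair_hop y x x' v)
      then of_real (pair_hop_coeff y x x' v) * low_sector n ell R \<psi> (pair_hop y x x' v) else 0)"

lemma leak_eq:
  "(\<Sum>k<R. Htilde n ell y (QEC n ell R k \<psi>) v - QE n k (Htilde n ell y (QEC n ell R k \<psi>)) v)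
     = 1 / of_nat ell * (\<Sum>x<2^n. \<Sum>x'<2^n. leak_term n ell R y \<psi> v x x')"
proof -
  have collapse: "(\<Sum>k<R. of_bool (odd_count n v \<noteq> k) * (c * QEC n ell R k \<psi> w))
                = (if odd_count n v \<noteq> odd_count n w then c * low_sector n ell R \<psi> w else 0)" for c w
  proof -
    have "(\<Sum>k<R. of_bool (odd_count n v \<noteq> k) * (c * QEC n ell R k \<psi> w))
            = (\<Sum>k<R. if k = odd_count n w
                      then of_bool (odd_count n v \<noteq> k) * (c * (if ell - R \<le> w 0 then \<psi> w else 0))
                      else 0)"
      by (intro sum.cong) (auto simp: QEC_def Con_def QE_def)
    then show ?thesis by (simp add: low_sector_def)
  qed
  have "(\<Sum>k<R. Htilde n ell y (QEC n ell R k \<psi>) v - QE n k (Htilde n ell y (QEC n ell R k \<psi>)) v)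
          = (\<Sum>k<R. of_bool (odd_count n v \<noteq> k) * Htilde n ell y (QEC n ell R k \<psi>) v)"
    by (intro sum.cong) (auto simp: QE_def)
  also have "\<dots> = 1 / of_nat ell * (\<Sum>x<2^n. \<Sum>x'<2^n. \<Sum>k<R. of_bool (odd_count n v \<noteq> k) *
                      (of_real (pair_hop_coeff y x x' v) * QEC n ell R k \<psi> (pair_hop y x x' v)))"
    by (simp add: Htilde_eq sum_distrib_left sum.swap[of _ "{..<R}"] mult.left_commute)
  finally show ?thesis by (simp only: collapse leak_term_def)
qed

lemma leak_term_nonzeroD:
  assumes "leak_term n ell R y \<psi> v x x' \<noteq> 0"
  shows "pair_hop_coeff y x x' v \<noteq> 0" and "x \<noteq> x'" and "x' \<noteq> xor x y"
    and "low_sector n ell R \<psi> (pair_hop y x x' v) \<noteq> 0"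
proof -
  show coeff: "pair_hop_coeff y x x' v \<noteq> 0"
    and "low_sector n ell R \<psi> (pair_hop y x x' v) \<noteq> 0"
    using assms by (auto simp: leak_term_def split: if_splits)
  have "odd_count n (pair_hop y x x' v) \<noteq> odd_count n v"
    using assms by (auto simp: leak_term_def split: if_splits)
  then show "x \<noteq> x'" and "x' \<noteq> xor x y"
    using odd_count_pair_hop_eq[OF coeff] by auto
qed

lemma low_sector_nonzeroD:
  assumes "\<psi> \<in> boson_space n ell" and "low_sector n ell R \<psi> w \<noteq> 0"
  shows "w \<in> fock_basis n ell" and "ell - R \<le> w 0" and "odd_count n w < R"
  using assms by (auto simp: low_sector_def boson_space_def split: if_splits)

text \<open>The modes \<open>x \<oplus> y\<close>, \<open>x' \<oplus> y\<close> of a leaking term are occupied in \<open>v\<close>, and \<open>v\<close> has at most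
  \<open>R + 1\<close> excited bosons because a pair hop raises the occupation of mode 0 by at most one.\<close>

lemma card_leak_support_le:
  assumes "v \<in> fock_basis n ell" and "\<psi> \<in> boson_space n ell"
  shows "card {p \<in> {..<2^n} \<times> {..<2^n}. (\<lambda>(x, x'). leak_term n ell R y \<psi> v x x') p \<noteq> 0}
           \<le> (R + 2)\<^sup>2" (is "card ?S \<le> _")
proof (cases "?S = {}")
  case True
  then show ?thesis by (simp only: card.empty zero_le)
next
  case False
  then obtain x x' where "leak_term n ell R y \<psi> v x x' \<noteq> 0" by auto
  note leak = leak_term_nonzeroD[OF this]
  have "ell - R \<le> pair_hop y x x' v 0"
    using low_sector_nonzeroD(2)[OF assms(2) leak(4)] .
  moreover have "pair_hop y x x' v 0 \<le> v 0 + 1"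
    using pair_hop_zero_le[OF leak(1,2)] .
  ultimately have excitations: "ell - v 0 \<le> R + 1" by linarith
  define T where "T = {m \<in> {..<2^n}. 0 < v m}"
  have card_T: "card T \<le> R + 2"
    using card_occupied_le[OF assms(1)] excitations by (simp add: T_def)
  have "?S \<subseteq> (\<lambda>(a, b). (xor a y, xor b y)) ` (T \<times> T)"
  proof
    fix p assume "p \<in> ?S"
    moreover obtain a b where ab: "p = (a, b)" by fastforce
    ultimately have coeff: "pair_hop_coeff y a b v \<noteq> 0" using leak_term_nonzeroD(1) by auto
    have "0 < v (xor a y)" "0 < v (xor b y)"
      using pair_hop_coeff_nonzeroD[OF coeff, of "xor a y"] pair_hop_coeff_nonzeroD[OF coeff, of "xor b y"]
      by auto
    then have "(xor a y, xor b y) \<in> T \<times> T"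
      using assms(1) by (auto simp: T_def fock_basis_def not_less[symmetric])
    moreover have "(a, b) = (\<lambda>(a, b). (xor a y, xor b y)) (xor a y, xor b y)" by simp
    ultimately show "p \<in> (\<lambda>(a, b). (xor a y, xor b y)) ` (T \<times> T)" using ab by blast
  qed
  then have "card ?S \<le> card ((\<lambda>(a, b). (xor a y, xor b y)) ` (T \<times> T))"
    by (intro card_mono) (auto simp: T_def)
  also have "\<dots> \<le> card (T \<times> T)"
    by (rule card_image_le) (simp add: T_def)
  also have "\<dots> \<le> (R + 2)\<^sup>2"
    using card_T by (simp add: card_cartesian_product power2_eq_square mult_le_mono del: add_2_eq_Suc')
  finally show ?thesis .
qed

lemma sum_leak_term_squared_le:
  assumes "y \<noteq> 0" and "\<psi> \<in> boson_space n ell"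
  shows "(\<Sum>v\<in>fock_basis n ell. (cmod (leak_term n ell R y \<psi> v x x'))\<^sup>2)
           \<le> (\<Sum>w\<in>fock_basis n ell. real (hop_weight y w x x') * (cmod (low_sector n ell R \<psi> w))\<^sup>2)"
proof -
  define V where "V = {v \<in> fock_basis n ell. leak_term n ell R y \<psi> v x x' \<noteq> 0}"
  define h where "h w = real (hop_weight y w x x') * (cmod (low_sector n ell R \<psi> w))\<^sup>2" for w
  have "(\<Sum>v\<in>fock_basis n ell. (cmod (leak_term n ell R y \<psi> v x x'))\<^sup>2)
          = (\<Sum>v\<in>V. (cmod (leak_term n ell R y \<psi> v x x'))\<^sup>2)"
    by (intro sum.mono_neutral_right) (auto simp: V_def finite_fock_basis)
  also have "\<dots> = (\<Sum>v\<in>V. h (pair_hop y x x' v))"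
  proof (intro sum.cong refl)
    fix v assume "v \<in> V"
    then have leak: "leak_term n ell R y \<psi> v x x' \<noteq> 0" by (simp add: V_def)
    note nz = leak_term_nonzeroD[OF leak]
    have "leak_term n ell R y \<psi> v x x'
            = of_real (pair_hop_coeff y x x' v) * low_sector n ell R \<psi> (pair_hop y x x' v)"
      using leak by (auto simp: leak_term_def split: if_splits)
    then show "(cmod (leak_term n ell R y \<psi> v x x'))\<^sup>2 = h (pair_hop y x x' v)"
      using pair_hop_coeff_squared[OF assms(1) nz(2,3,1)]
      by (simp add: h_def norm_mult power_mult_distrib)
  qed
  also have "\<dots> = (\<Sum>w\<in>pair_hop y x x' ` V. h w)"
  proof -
    have "inj_on (pair_hop y x x') V"
      by (rule inj_on_subset[OF inj_on_pair_hop]) (auto simp: V_def dest: leak_term_nonzeroD(1))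
    then show ?thesis by (simp add: sum.reindex)
  qed
  also have "\<dots> \<le> (\<Sum>w\<in>fock_basis n ell. h w)"
  proof (rule sum_mono2[OF finite_fock_basis])
    show "pair_hop y x x' ` V \<subseteq> fock_basis n ell"
      using low_sector_nonzeroD(1)[OF assms(2) leak_term_nonzeroD(4)] by (auto simp: V_def)
  qed (simp add: h_def)
  finally show ?thesis by (simp add: h_def)
qed

text \<open>Since \<open>x \<noteq> x'\<close> and \<open>x' \<noteq> x \<oplus> y\<close>, at most one of the four modes \<open>x, x', x \<oplus> y, x' \<oplus> y\<close> is
  the condensate mode 0, so only one factor of a hop weight can be of order \<open>ell\<close>.\<close>

lemma hop_weight_le:
  fixes w :: occ and s ell :: nat
  assumes excited: "\<And>m. m \<noteq> 0 \<Longrightarrow> w m \<le> s" and "w 0 \<le> ell" and "s \<le> ell" and "y \<noteq> 0"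
  defines "u \<equiv> \<lambda>m. if m = 0 then 0 else w m"
  shows "hop_weight y w x x'
           \<le> ell * (s + 1)\<^sup>2 * (of_bool (x = 0) * u x' + of_bool (x' = 0) * u x)
              + (ell + 1) * (s + 1) * (u x * u x')"
proof (cases "x \<noteq> x' \<and> x' \<noteq> xor x y")
  case False
  then have "hop_weight y w x x' = 0" by (auto simp: hop_weight_def)
  then show ?thesis by simp
next
  case True
  then have weight: "hop_weight y w x x' = w x * w x' * ((w (xor x y) + 1) * (w (xor x' y) + 1))"
    by (simp add: hop_weight_def algebra_simps)
  have le_ell: "w m \<le> ell" for m
    using excited[of m] assms(2,3) by (cases "m = 0") auto
  have both_excited: "(w a + 1) * (w b + 1) \<le> (s + 1)\<^sup>2" if "a \<noteq> 0" "b \<noteq> 0" for a b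
    unfolding power2_eq_square using excited[OF that(1)] excited[OF that(2)] by (intro mult_le_mono) auto
  have one_excited: "(w a + 1) * (w b + 1) \<le> (ell + 1) * (s + 1)" if "a \<noteq> b" for a b
  proof (cases "a = 0")
    case True
    with that show ?thesis using le_ell[of a] excited[of b] by (intro mult_le_mono) auto
  next
    case False
    then have "(w a + 1) * (w b + 1) \<le> (s + 1) * (ell + 1)"
      using le_ell[of b] excited[of a] by (intro mult_le_mono) auto
    then show ?thesis by (simp add: mult.commute)
  qed
  consider "x = 0" | "x' = 0" | "x \<noteq> 0" "x' \<noteq> 0" by blast
  then show ?thesis
  proof cases
    case 1
    then have "hop_weight y w x x' \<le> (ell * u x') * (s + 1)\<^sup>2"
      unfolding weight using True assms(2,4) both_excited[of "xor x y" "xor x' y"]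
      by (intro mult_le_mono) (auto simp: u_def)
    then show ?thesis using 1 by (simp add: algebra_simps)
  next
    case 2
    then have "hop_weight y w x x' \<le> (u x * ell) * (s + 1)\<^sup>2"
      unfolding weight using True assms(2,4) both_excited[of "xor x y" "xor x' y"]
      by (intro mult_le_mono) (auto simp: u_def)
    then show ?thesis using 2 by (simp add: algebra_simps)
  next
    case 3
    then have "hop_weight y w x x' \<le> (u x * u x') * ((ell + 1) * (s + 1))"
      using 3 True one_excited[of "xor x y" "xor x' y"] unfolding weight u_def
      by (simp add: mult_le_mono2)
    then show ?thesis by (simp add: algebra_simps)
  qed
qed

lemma sum_hop_weight_le:
  assumes "w \<in> fock_basis n ell" and "y \<noteq> 0"
  defines "s \<equiv> ell - w 0"
  shows "(\<Sum>x<2^n. \<Sum>x'<2^n. hop_weight y w x x') \<le> 2 * ell * s * (s + 1)\<^sup>2 + (ell + 1) * (s + 1) * s\<^sup>2"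
proof -
  define u where "u m = (if m = 0 then 0 else w m)" for m
  have sum_u: "(\<Sum>m<2^n. u m) = s"
    using fock_basis_excitations(2)[OF assms(1)]
    by (simp add: u_def s_def sum.remove[of "{..<2^n}" 0])
  have "(\<Sum>x<2^n. \<Sum>x'<2^n. hop_weight y w x x')
          \<le> (\<Sum>x<2^n. \<Sum>x'<2^n. ell * (s + 1)\<^sup>2 * (of_bool (x = 0) * u x' + of_bool (x' = 0) * u x)
                                 + (ell + 1) * (s + 1) * (u x * u x'))"
  proof (intro sum_mono)
    fix x x'
    have "w m \<le> s" if "m \<noteq> 0" for m
      unfolding s_def using fock_basis_excited_le[OF assms(1) that] .
    with fock_basis_excitations(1)[OF assms(1)] assms(2)
    show "hop_weight y w x x' \<le> ell * (s + 1)\<^sup>2 * (of_bool (x = 0) * u x' + of_bool (x' = 0) * u x)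
                                 + (ell + 1) * (s + 1) * (u x * u x')"
      unfolding u_def by (intro hop_weight_le) (auto simp: s_def)
  qed
  also have "\<dots> = ell * (s + 1)\<^sup>2 * (s + s) + (ell + 1) * (s + 1) * (s * s)"
    by (simp add: sum.distrib sum_distrib_left[symmetric] sum_distrib_right[symmetric] sum_u)
  finally show ?thesis by (simp add: power2_eq_square algebra_simps)
qed

lemma excitation_polynomial_le:
  fixes s R ell :: nat
  assumes "s \<le> R" and "R \<le> 1 \<Longrightarrow> s = 0" and "1 \<le> ell"
  shows "(R + 2)\<^sup>2 * (2 * ell * s * (s + 1)\<^sup>2 + (ell + 1) * (s + 1) * s\<^sup>2) \<le> ell * R ^ 10"
proof (cases "s = 0")
  case False
  then have R: "2 \<le> R" using assms(2) by linarith
  have "(R + 2)\<^sup>2 * (2 * ell * s * (s + 1)\<^sup>2 + (ell + 1) * (s + 1) * s\<^sup>2)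
          \<le> (R + 2)\<^sup>2 * (2 * ell * R * (R + 1)\<^sup>2 + (2 * ell) * (R + 1) * R\<^sup>2)"
    using assms(1,3) by (intro mult_le_mono add_le_mono power_mono) auto
  also have "\<dots> = ell * ((R + 2)\<^sup>2 * (R + 1) * (4 * R\<^sup>2 + 2 * R))"
    by (simp add: power2_eq_square algebra_simps)
  also have "\<dots> \<le> ell * R ^ 10"
  proof (rule mult_le_mono2)
    show "(R + 2)\<^sup>2 * (R + 1) * (4 * R\<^sup>2 + 2 * R) \<le> R ^ 10"
    proof (cases "R = 2")
      case False
      then have "3 \<le> R" using R by simp
      have "(R + 2)\<^sup>2 * (R + 1) * (4 * R\<^sup>2 + 2 * R) \<le> (2 * R)\<^sup>2 * (2 * R) * (6 * R\<^sup>2)"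
        using \<open>3 \<le> R\<close> by (intro mult_le_mono power_mono) (auto simp: power2_eq_square)
      also have "\<dots> = 48 * R ^ 5" by algebra
      also have "\<dots> \<le> R ^ 5 * R ^ 5"
        using power_mono[OF \<open>3 \<le> R\<close>, of 5] by (intro mult_right_mono) auto
      finally show ?thesis by (simp flip: power_add)
    qed simp
  qed
  finally show ?thesis .
qed simp

lemma sum_hop_weight_low_sector_le:
  assumes "\<psi> \<in> boson_space n ell" and "low_sector n ell R \<psi> w \<noteq> 0" and "y \<noteq> 0" and "R < ell"
  shows "(R + 2)\<^sup>2 * (\<Sum>x<2^n. \<Sum>x'<2^n. hop_weight y w x x') \<le> ell * R ^ 10"
proof -
  note low = low_sector_nonzeroD[OF assms(1,2)]
  define s where "s = ell - w 0"
  have "s \<le> R" using low(2) by (simp add: s_def)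
  moreover have "s = 0" if "R \<le> 1"
    using fock_basis_even_excitations[OF low(1)] low(3) \<open>s \<le> R\<close> that by (simp add: s_def)
  ultimately have "(R + 2)\<^sup>2 * (2 * ell * s * (s + 1)\<^sup>2 + (ell + 1) * (s + 1) * s\<^sup>2) \<le> ell * R ^ 10"
    using assms(4) by (intro excitation_polynomial_le) auto
  then show ?thesis
    using sum_hop_weight_le[OF low(1) assms(3)] unfolding s_def by (meson le_trans mult_le_mono2)
qed

lemma sum_leak_squared_le:
  assumes "R < ell" and "y \<noteq> 0" and "\<psi> \<in> boson_space n ell"
  shows "(\<Sum>v\<in>fock_basis n ell. (cmod (\<Sum>x<2^n. \<Sum>x'<2^n. leak_term n ell R y \<psi> v x x'))\<^sup>2)
           \<le> real (ell * R ^ 10) * (\<Sum>w\<in>fock_basis n ell. (cmod (low_sector n ell R \<psi> w))\<^sup>2)"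
proof -
  let ?P = "{..<(2::nat)^n} \<times> {..<(2::nat)^n}"
  let ?G = "\<lambda>v (x, x'). leak_term n ell R y \<psi> v x x'"
  let ?D = "\<lambda>w (x, x'). real (hop_weight y w x x')"
  have "(\<Sum>v\<in>fock_basis n ell. (cmod (\<Sum>p\<in>?P. ?G v p))\<^sup>2)
          \<le> real (ell * R ^ 10) * (\<Sum>w\<in>fock_basis n ell. (cmod (low_sector n ell R \<psi> w))\<^sup>2)"
  proof (rule sum_norm_sum_squared_le[where K = "(R + 2)\<^sup>2" and D = ?D])
    show "card {p \<in> ?P. ?G v p \<noteq> 0} \<le> (R + 2)\<^sup>2" if "v \<in> fock_basis n ell" for v
      using card_leak_support_le[OF that assms(3)] .
    show "(\<Sum>v\<in>fock_basis n ell. (cmod (?G v p))\<^sup>2)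
            \<le> (\<Sum>w\<in>fock_basis n ell. ?D w p * (cmod (low_sector n ell R \<psi> w))\<^sup>2)" for p
      using sum_leak_term_squared_le[OF assms(2,3)] by (cases p) simp
    show "real ((R + 2)\<^sup>2) * (\<Sum>p\<in>?P. ?D w p) \<le> real (ell * R ^ 10)"
      if "(cmod (low_sector n ell R \<psi> w))\<^sup>2 \<noteq> 0" for w
    proof -
      have "(R + 2)\<^sup>2 * (\<Sum>p\<in>?P. (\<lambda>(x, x'). hop_weight y w x x') p) \<le> ell * R ^ 10"
        using sum_hop_weight_low_sector_le[OF assms(3) _ assms(2,1), of w] that
        by (simp add: sum.cartesian_product)
      then have "real ((R + 2)\<^sup>2 * (\<Sum>p\<in>?P. (\<lambda>(x, x'). hop_weight y w x x') p)) \<le> real (ell * R ^ 10)"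
        by (rule of_nat_mono)
      then show ?thesis
        by (simp only: of_nat_mult of_nat_sum prod.case_distrib[of real])
    qed
  qed auto
  then show ?thesis by (simp add: sum.cartesian_product)
qed

lemma fnorm_leak_le:
  assumes "R < ell" and "y \<noteq> 0" and "\<psi> \<in> boson_space n ell" and "fnorm n ell \<psi> \<le> 1"
  shows "fnorm n ell (\<lambda>v. \<Sum>k<R. Htilde n ell y (QEC n ell R k \<psi>) v
                                 - QE n k (Htilde n ell y (QEC n ell R k \<psi>)) v)
           \<le> real R ^ 5 / sqrt (real ell)"
proof -
  let ?B = "fock_basis n ell"
  let ?A = "\<lambda>v. \<Sum>k<R. Htilde n ell y (QEC n ell R k \<psi>) v - QE n k (Htilde n ell y (QEC n ell R k \<psi>)) v"
  let ?L = "\<lambda>v. \<Sum>x<2^n. \<Sum>x'<2^n. leak_term n ell R y \<psi> v x x'"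
  have "(\<Sum>w\<in>?B. (cmod (low_sector n ell R \<psi> w))\<^sup>2) \<le> (\<Sum>w\<in>?B. (cmod (\<psi> w))\<^sup>2)"
    by (intro sum_mono) (simp add: low_sector_def)
  also have "\<dots> \<le> 1"
    using assms(4) by (simp add: fnorm_def)
  finally have "(\<Sum>w\<in>?B. (cmod (low_sector n ell R \<psi> w))\<^sup>2) \<le> 1" .
  then have "(\<Sum>v\<in>?B. (cmod (?L v))\<^sup>2) \<le> real (ell * R ^ 10) * 1"
    by (rule order_trans[OF sum_leak_squared_le[OF assms(1-3)] mult_left_mono]) simp
  then have leak_bound: "(\<Sum>v\<in>?B. (cmod (?L v))\<^sup>2) / (real ell)\<^sup>2 \<le> real (ell * R ^ 10) / (real ell)\<^sup>2"
    by (simp add: divide_right_mono)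
  have "(\<Sum>v\<in>?B. (cmod (?A v))\<^sup>2) = (\<Sum>v\<in>?B. (cmod (?L v))\<^sup>2 / (real ell)\<^sup>2)"
    by (simp add: leak_eq norm_mult norm_divide power_divide)
  also have "\<dots> = (\<Sum>v\<in>?B. (cmod (?L v))\<^sup>2) / (real ell)\<^sup>2"
    by (simp add: sum_divide_distrib)
  also have "\<dots> \<le> (real R ^ 5 / sqrt (real ell))\<^sup>2"
    using leak_bound assms(1) by (simp add: power_divide power2_eq_square flip: power_add)
  finally show ?thesis
    unfolding fnorm_def by (intro real_le_lsqrt) auto
qed

lemma op_norm_le:
  assumes "\<And>\<psi>. \<psi> \<in> boson_space n ell \<Longrightarrow> fnorm n ell \<psi> \<le> 1 \<Longrightarrow> fnorm n ell (A \<psi>) \<le> c"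
  shows "op_norm n ell A \<le> c"
  unfolding op_norm_def
proof (rule cSup_least)
  have "(\<lambda>_. 0) \<in> boson_space n ell" "fnorm n ell (\<lambda>_. 0) \<le> 1"
    by (simp_all add: boson_space_def fnorm_def)
  then show "{fnorm n ell (A \<psi>) | \<psi>. \<psi> \<in> boson_space n ell \<and> fnorm n ell \<psi> \<le> 1} \<noteq> {}" by blast
qed (use assms in blast)

theorem mainTheorem16:
  fixes n ell R y :: nat
  assumes "R < ell" and "y < 2^n" and "y \<noteq> 0"
  shows "op_norm n ell
           (\<lambda>\<psi> v. \<Sum>k<R. Htilde n ell y (QEC n ell R k \<psi>) v
                          - QE n k (Htilde n ell y (QEC n ell R k \<psi>)) v)
         \<le> real R ^ 5 / sqrt (real ell)"
  using fnorm_leak_le[OF assms(1,3)] by (rule op_norm_le)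

end
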